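(* Let $A$ be a store with sequence number $s_A$ performed by thread $i$, represented by a node of an acyclic modification order graph $G$. Then $U_i(CV_A) = U_i(\perp_{CV_A}) = s_A$ holds throughout each execution that terminates, where $U_i$ denotes the $i$-th component of a clock vector.
   Context: An execution is a sequence of events performed by threads. Each event $E$ has a thread id $t_E$ and a unique sequence number $s_E$ taken from a global counter that is incremented by one at every event, so sequence numbers strictly increase along the execution. A clock vector is a function from thread ids to natural numbers, with $(CV_1 \cup CV_2)(t) = \max(CV_1(t), CV_2(t))$ and $CV_1 \le CV_2$ iff $CV_1(t) \le CV_2(t)$ for all $t$; $U_i(CV) = CV(i)$. The modification order graph (mo-graph) has one node for each atomic store or atomic read-modify-write (RMW) executed so far; edges only connect nodes accessing the same memory location, and mo edges are added to it during the execution according to the C/C++ modification-order (coherence) constraints, so that the modification order it represents is consistent with the sequenced-before order of each thread. Each node $X$ stores a thread id $X.tid$, a set $X.edges$ of successor nodes (its outgoing mo edges), a field $X.rmw$ (a node or null), and a clock vector $X.cv$, also written $CV_X$. When the node for a store $A$ is created, its clock vector is $\perp_{CV_A} = \lambda t.\ (s_A \text{ if } t = t_A \text{ else } 0)$. Edges are added only by the following procedures. Merge(dst, src): if $src.cv \le dst.cv$ return false; otherwise set $dst.cv := dst.cv \cup src.cv$ and return true. AddEdge(from, to): let mustAdd be true iff ($from.rmw = to$ or $from.tid = to.tid$). If $from.cv \le to.cv$ and not mustAdd, return. While $from.rmw \ne$ null: let $next := from.rmw$; if $next = to$ stop the loop; otherwise $from := next$. Add $to$ to $from.edges$. If Merge(to,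 from) returns true, then let $Q := \{to\}$ and while $Q$ is nonempty remove a node $node$ from $Q$ and for each $dst \in node.edges$, if Merge(dst, node) returns true add $dst$ to $Q$. AddRMWEdge(from, rmw): set $from.rmw := rmw$; for each $dst \in from.edges$ with $dst \ne rmw$ add $dst$ to $rmw.edges$; set $from.edges := \emptyset$; call AddEdge(from, rmw). *)

theory Defs
  imports Main
begin

type_synonym cvec = "nat \<Rightarrow> nat"

definition cv_le :: "cvec \<Rightarrow> cvec \<Rightarrow> bool" where
  "cv_le a b \<longleftrightarrow> (\<forall>t. a t \<le> b t)"

definition cv_union :: "cvec \<Rightarrow> cvec \<Rightarrow> cvec" where
  "cv_union a b = (\<lambda>t. max (a t) (b t))"

text \<open>Initial clock vector of a store with thread id t and sequence number s.\<close>
definition bot_cv :: "nat \<Rightarrow> nat \<Rightarrow> cvec" where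
  "bot_cv t s = (\<lambda>u. if u = t then s else 0)"

record mo_state =
  ctr   :: nat                   \<comment> \<open>global event counter (last sequence number used)\<close>
  nds   :: "nat set"
  tid   :: "nat \<Rightarrow> nat"
  sq    :: "nat \<Rightarrow> nat"
  loc   :: "nat \<Rightarrow> nat"
  edges :: "nat \<Rightarrow> nat set"
  rmw   :: "nat \<Rightarrow> nat option"  \<comment> \<open>None = null\<close>
  cv    :: "nat \<Rightarrow> cvec"

definition merge :: "mo_state \<Rightarrow> nat \<Rightarrow> nat \<Rightarrow> bool \<times> mo_state" where
  "merge s dst src =
     (if cv_le (cv s src) (cv s dst) then (False, s)
      else (True, s\<lparr>cv := (cv s)(dst := cv_union (cv s dst) (cv s src))\<rparr>))"

text \<open>Inner for-loop of the propagation: iterate (in any order) over the set D of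
  remaining successors of node, with worklist Q.\<close>
inductive prop_inner :: "mo_state \<Rightarrow> nat \<Rightarrow> nat set \<Rightarrow> nat set \<Rightarrow> mo_state \<Rightarrow> nat set \<Rightarrow> bool" where
  pi_done: "prop_inner s node {} Q s Q"
| pi_step: "\<lbrakk> dst \<in> D; merge s dst node = (b, s1);
             prop_inner s1 node (D - {dst}) (if b then insert dst Q else Q) s' Q' \<rbrakk>
           \<Longrightarrow> prop_inner s node D Q s' Q'"

inductive propagate :: "mo_state \<Rightarrow> nat set \<Rightarrow> mo_state \<Rightarrow> bool" where
  pr_done: "propagate s {} s"
| pr_step: "\<lbrakk> node \<in> Q; prop_inner s node (edges s node) (Q - {node}) s1 Q1;
             propagate s1 Q1 s2 \<rbrakk> \<Longrightarrow> propagate s Q s2"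

text \<open>The loop following rmw pointers: rmw_chain s from to c means the loop, started
  at from, ends with from := c.\<close>
inductive rmw_chain :: "mo_state \<Rightarrow> nat \<Rightarrow> nat \<Rightarrow> nat \<Rightarrow> bool" where
  rc_null: "rmw s x = None \<Longrightarrow> rmw_chain s x to x"
| rc_hit:  "rmw s x = Some to \<Longrightarrow> rmw_chain s x to x"
| rc_next: "\<lbrakk> rmw s x = Some n; n \<noteq> to; rmw_chain s n to c \<rbrakk> \<Longrightarrow> rmw_chain s x to c"

definition must_add :: "mo_state \<Rightarrow> nat \<Rightarrow> nat \<Rightarrow> bool" where
  "must_add s from to \<longleftrightarrow> (rmw s from = Some to \<or> tid s from = tid s to)"

definition add_succ :: "mo_state \<Rightarrow> nat \<Rightarrow> nat \<Rightarrow> mo_state" where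
  "add_succ s c to = s\<lparr>edges := (edges s)(c := insert to (edges s c))\<rparr>"

text \<open>AddEdge(from, to) as a big-step relation (the propagation may be nondeterministic
  in the choice of worklist element and successor order).\<close>
inductive add_edge :: "mo_state \<Rightarrow> nat \<Rightarrow> nat \<Rightarrow> mo_state \<Rightarrow> bool" where
  ae_skip: "\<lbrakk> cv_le (cv s from) (cv s to); \<not> must_add s from to \<rbrakk> \<Longrightarrow> add_edge s from to s"
| ae_nomerge: "\<lbrakk> \<not> (cv_le (cv s from) (cv s to) \<and> \<not> must_add s from to);
                rmw_chain s from to c; merge (add_succ s c to) to c = (False, s2) \<rbrakk>
              \<Longrightarrow> add_edge s from to s2"
| ae_merge: "\<lbrakk> \<not> (cv_le (cv s from) (cv s to) \<and> \<not> must_add s from to);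
              rmw_chain s from to c; merge (add_succ s c to) to c = (True, s2);
              propagate s2 {to} s3 \<rbrakk>
            \<Longrightarrow> add_edge s from to s3"

definition rmw_prep :: "mo_state \<Rightarrow> nat \<Rightarrow> nat \<Rightarrow> mo_state" where
  "rmw_prep s from r =
    (let s1 = s\<lparr>rmw := (rmw s)(from := Some r)\<rparr>;
         s2 = s1\<lparr>edges := (edges s1)(r := edges s1 r \<union> (edges s1 from - {r}))\<rparr>
     in s2\<lparr>edges := (edges s2)(from := {})\<rparr>)"

inductive add_rmw_edge :: "mo_state \<Rightarrow> nat \<Rightarrow> nat \<Rightarrow> mo_state \<Rightarrow> bool" where
  "add_edge (rmw_prep s from r) from r s' \<Longrightarrow> add_rmw_edge s from r s'"

definition new_node :: "mo_state \<Rightarrow> nat \<Rightarrow> nat \<Rightarrow> nat \<Rightarrow> mo_state" where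
  "new_node s n t l =
    s\<lparr>ctr := Suc (ctr s), nds := insert n (nds s),
      tid := (tid s)(n := t), sq := (sq s)(n := Suc (ctr s)), loc := (loc s)(n := l),
      edges := (edges s)(n := {}), rmw := (rmw s)(n := None),
      cv := (cv s)(n := bot_cv t (Suc (ctr s)))\<rparr>"

text \<open>One step of an execution: an event creating no node (counter incremented), an
  event creating a node, or a call of AddEdge / AddRMWEdge between existing nodes
  accessing the same location.\<close>
inductive mo_step :: "mo_state \<Rightarrow> mo_state \<Rightarrow> bool" where
  st_event: "mo_step s (s\<lparr>ctr := Suc (ctr s)\<rparr>)"
| st_node: "n \<notin> nds s \<Longrightarrow> mo_step s (new_node s n t l)"
| st_edge: "\<lbrakk> a \<in> nds s; b \<in> nds s; loc s a = loc s b; add_edge s a b s' \<rbrakk> \<Longrightarrow> mo_step s s'"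
| st_rmw: "\<lbrakk> a \<in> nds s; b \<in> nds s; loc s a = loc s b; add_rmw_edge s a b s' \<rbrakk> \<Longrightarrow> mo_step s s'"

definition init_state :: "mo_state \<Rightarrow> bool" where
  "init_state s \<longleftrightarrow> ctr s = 0 \<and> nds s = {}"

definition mo_graph :: "mo_state \<Rightarrow> nat rel" where
  "mo_graph s = {(x, y). x \<in> nds s \<and> y \<in> edges s x}"

text \<open>The modification order represented by the graph (its transitive closure) is
  consistent with sequenced-before: same-thread same-location nodes are ordered by their
  sequence numbers.\<close>
definition sb_consistent :: "mo_state \<Rightarrow> bool" where
  "sb_consistent s \<longleftrightarrow>
     (\<forall>a\<in>nds s. \<forall>b\<in>nds s. tid s a = tid s b \<and> loc s a = loc s b \<and> sq s a < sq s b
        \<longrightarrow> (a, b) \<in> (mo_graph s)\<^sup>+)"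

end

(* Clock vectors only ever grow by Merge along mo edges, and a fresh node starts at
   bot_cv. Hence, invariantly, CV_x(t) is either 0 or bounded by s_y for some node y of
   thread t with an mo path from y to x, while CV_x(t_x) >= s_x. For t = t_A a witness y
   with s_y > s_A would, by consistency with sequenced-before in the final graph, also
   give a path from A to y, i.e. an mo cycle; so CV_A(t_A) = s_A. *)

theory Submission
  imports Defs
begin

definition mo_wf :: "mo_state \<Rightarrow> bool" where
  "mo_wf s \<longleftrightarrow> (\<forall>x\<in>nds s.
     (\<forall>y\<in>edges s x. y \<in> nds s \<and> loc s y = loc s x) \<and>
     (\<forall>r. rmw s x = Some r \<longrightarrow> r \<in> nds s \<and> loc s r = loc s x))"

definition mo_witnessed :: "mo_state \<Rightarrow> nat \<Rightarrow> nat \<Rightarrow> nat \<Rightarrow> bool" where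
  "mo_witnessed s x t v \<longleftrightarrow>
     v = 0 \<or> (\<exists>y\<in>nds s. (y, x) \<in> (mo_graph s)\<^sup>* \<and> tid s y = t \<and> v \<le> sq s y)"

definition cv_sound :: "mo_state \<Rightarrow> bool" where
  "cv_sound s \<longleftrightarrow> (\<forall>x\<in>nds s. sq s x \<le> cv s x (tid s x) \<and> (\<forall>t. mo_witnessed s x t (cv s x t)))"

definition cv_variant :: "mo_state \<Rightarrow> mo_state \<Rightarrow> bool" where
  "cv_variant s s' \<longleftrightarrow> s' = s\<lparr>cv := cv s'\<rparr>"

definition mo_extends :: "mo_state \<Rightarrow> mo_state \<Rightarrow> bool" where
  "mo_extends s s' \<longleftrightarrow> nds s \<subseteq> nds s' \<and>
     (\<forall>x\<in>nds s. tid s' x = tid s x \<and> sq s' x = sq s x \<and> loc s' x = loc s x) \<and>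
     mo_graph s \<subseteq> (mo_graph s')\<^sup>+"

text \<open>The common tail of AddEdge once the edge c \<rightarrow> to has been inserted.\<close>
definition merge_propagate :: "mo_state \<Rightarrow> nat \<Rightarrow> nat \<Rightarrow> mo_state \<Rightarrow> bool" where
  "merge_propagate s to c s' \<longleftrightarrow>
     (\<exists>b s1. merge s to c = (b, s1) \<and> (if b then propagate s1 {to} s' else s' = s1))"

lemma mo_wfI:
  assumes "\<And>x y. x \<in> nds s \<Longrightarrow> y \<in> edges s x \<Longrightarrow> y \<in> nds s \<and> loc s y = loc s x"
    and "\<And>x y. x \<in> nds s \<Longrightarrow> rmw s x = Some y \<Longrightarrow> y \<in> nds s \<and> loc s y = loc s x"
  shows "mo_wf s"
  using assms unfolding mo_wf_def by blast

lemma mo_wf_edgeD: "mo_wf s \<Longrightarrow> x \<in> nds s \<Longrightarrow> y \<in> edges s x \<Longrightarrow> y \<in> nds s \<and> loc s y = loc s x"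
  unfolding mo_wf_def by blast

lemma mo_wf_rmwD: "mo_wf s \<Longrightarrow> x \<in> nds s \<Longrightarrow> rmw s x = Some y \<Longrightarrow> y \<in> nds s \<and> loc s y = loc s x"
  unfolding mo_wf_def by blast

lemma mo_witnessed_max:
  "mo_witnessed s x t u \<Longrightarrow> mo_witnessed s x t v \<Longrightarrow> mo_witnessed s x t (max u v)"
  by (simp add: max_def)

lemma mo_witnessed_path:
  "mo_witnessed s x t v \<Longrightarrow> (x, z) \<in> (mo_graph s)\<^sup>* \<Longrightarrow> mo_witnessed s z t v"
  unfolding mo_witnessed_def by (meson rtrancl_trans)

lemma mo_witnessed_extends:
  assumes "mo_witnessed s x t v" and ext: "mo_extends s s'"
  shows "mo_witnessed s' x t v"
proof -
  have "mo_graph s \<subseteq> (mo_graph s')\<^sup>*"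
    using ext by (auto simp: mo_extends_def dest: trancl_into_rtrancl)
  then have paths: "(mo_graph s)\<^sup>* \<subseteq> (mo_graph s')\<^sup>*"
    by (rule rtrancl_subset_rtrancl)
  from assms(1) consider "v = 0"
    | y where "y \<in> nds s" "(y, x) \<in> (mo_graph s)\<^sup>*" "tid s y = t" "v \<le> sq s y"
    unfolding mo_witnessed_def by blast
  then show ?thesis
  proof cases
    case 1
    then show ?thesis by (simp add: mo_witnessed_def)
  next
    case (2 y)
    with ext paths have "y \<in> nds s'" "(y, x) \<in> (mo_graph s')\<^sup>*" "tid s' y = t" "v \<le> sq s' y"
      unfolding mo_extends_def by auto
    then show ?thesis unfolding mo_witnessed_def by blast
  qed
qed

lemma cv_variant_iff: "cv_variant s s' \<longleftrightarrow> (\<exists>c. s' = s\<lparr>cv := c\<rparr>)"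
  unfolding cv_variant_def by auto

lemma cv_variant_refl: "cv_variant s s"
  by (simp add: cv_variant_def)

lemma cv_variant_trans: "cv_variant s1 s2 \<Longrightarrow> cv_variant s2 s3 \<Longrightarrow> cv_variant s1 s3"
  by (auto simp: cv_variant_iff)

lemma cv_variantD:
  assumes "cv_variant s s'"
  shows "nds s' = nds s" "edges s' = edges s" "tid s' = tid s" "sq s' = sq s" "loc s' = loc s"
    "rmw s' = rmw s" "mo_graph s' = mo_graph s"
  using assms by (auto simp: cv_variant_iff mo_graph_def)

lemma cv_variant_mo_wf: "cv_variant s s' \<Longrightarrow> mo_wf s' = mo_wf s"
  by (simp add: mo_wf_def cv_variantD)

lemma cv_variant_mo_witnessed: "cv_variant s s' \<Longrightarrow> mo_witnessed s' = mo_witnessed s"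
  by (simp add: mo_witnessed_def[abs_def] cv_variantD)

lemma mo_extends_refl: "mo_extends s s"
  unfolding mo_extends_def by auto

lemma mo_extends_trancl: "mo_extends s s' \<Longrightarrow> (mo_graph s)\<^sup>+ \<subseteq> (mo_graph s')\<^sup>+"
  unfolding mo_extends_def using trancl_mono_subset[of "mo_graph s" "(mo_graph s')\<^sup>+"] by simp

lemma mo_extends_trans:
  assumes "mo_extends s1 s2" and "mo_extends s2 s3"
  shows "mo_extends s1 s3"
proof -
  have "mo_graph s1 \<subseteq> (mo_graph s3)\<^sup>+"
    using assms mo_extends_trancl unfolding mo_extends_def by blast
  with assms show ?thesis
    unfolding mo_extends_def by (metis subsetD subsetI)
qed

lemma cv_variant_mo_extends: "cv_variant s s' \<Longrightarrow> mo_extends s s'"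
  by (auto simp: mo_extends_def cv_variantD)

lemma merge_cv_variant: "merge s dst src = (b, s') \<Longrightarrow> cv_variant s s'"
  by (auto simp: merge_def cv_variant_def split: if_splits)

lemma prop_inner_cv_variant: "prop_inner s node D Q s' Q' \<Longrightarrow> cv_variant s s'"
  by (induction rule: prop_inner.induct)
    (auto intro: cv_variant_refl cv_variant_trans merge_cv_variant)

lemma prop_inner_worklist: "prop_inner s node D Q s' Q' \<Longrightarrow> Q' \<subseteq> Q \<union> D"
  by (induction rule: prop_inner.induct) (auto split: if_splits)

lemma propagate_cv_variant: "propagate s Q s' \<Longrightarrow> cv_variant s s'"
  by (induction rule: propagate.induct)
    (auto intro: cv_variant_refl cv_variant_trans prop_inner_cv_variant)

lemma merge_propagate_cv_variant: "merge_propagate s to c s' \<Longrightarrow> cv_variant s s'"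
  unfolding merge_propagate_def
  by (auto split: if_splits intro: merge_cv_variant cv_variant_trans propagate_cv_variant)

lemma cv_sound_extends:
  assumes "cv_sound s" and "mo_extends s s'" and "nds s' = nds s" and "cv s' = cv s"
  shows "cv_sound s'"
  using assms mo_witnessed_extends unfolding cv_sound_def mo_extends_def by metis

lemma merge_cv_sound:
  assumes sound: "cv_sound s" and edge: "(src, dst) \<in> mo_graph s"
    and m: "merge s dst src = (b, s')"
  shows "cv_sound s'"
proof (cases "cv_le (cv s src) (cv s dst)")
  case True
  with m sound show ?thesis by (simp add: merge_def)
next
  case False
  with m have cv': "cv s' = (cv s)(dst := cv_union (cv s dst) (cv s src))"
    by (auto simp: merge_def)
  have variant: "cv_variant s s'"
    using m by (rule merge_cv_variant)
  have src: "src \<in> nds s"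
    using edge by (simp add: mo_graph_def)
  have "mo_witnessed s dst t (cv s src t)" for t
    using sound src edge mo_witnessed_path unfolding cv_sound_def by blast
  with sound show ?thesis
    unfolding cv_sound_def cv' cv_variantD[OF variant] cv_variant_mo_witnessed[OF variant]
    by (auto simp: cv_union_def intro: mo_witnessed_max le_trans)
qed

lemma prop_inner_cv_sound:
  "prop_inner s node D Q s' Q' \<Longrightarrow> cv_sound s \<Longrightarrow> node \<in> nds s \<Longrightarrow> D \<subseteq> edges s node
    \<Longrightarrow> cv_sound s'"
proof (induction rule: prop_inner.induct)
  case (pi_done s node Q)
  then show ?case by simp
next
  case (pi_step dst D s node b s1 Q s' Q')
  have "(node, dst) \<in> mo_graph s"
    using pi_step.hyps(1) pi_step.prems(2,3) by (auto simp: mo_graph_def)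
  then have "cv_sound s1"
    using merge_cv_sound pi_step.hyps(2) pi_step.prems(1) by blast
  moreover have "nds s1 = nds s" "edges s1 = edges s"
    using merge_cv_variant[OF pi_step.hyps(2)] by (simp_all add: cv_variantD)
  ultimately show ?case
    using pi_step.IH pi_step.prems(2,3) by auto
qed

lemma propagate_cv_sound:
  "propagate s Q s' \<Longrightarrow> mo_wf s \<Longrightarrow> cv_sound s \<Longrightarrow> Q \<subseteq> nds s \<Longrightarrow> cv_sound s'"
proof (induction rule: propagate.induct)
  case (pr_done s)
  then show ?case by simp
next
  case (pr_step node Q s s1 Q1 s2)
  have variant: "cv_variant s s1"
    using pr_step.hyps(2) by (rule prop_inner_cv_variant)
  have node: "node \<in> nds s"
    using pr_step.hyps(1) pr_step.prems(3) by blast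
  have "cv_sound s1"
    using prop_inner_cv_sound[OF pr_step.hyps(2) pr_step.prems(2) node] by simp
  moreover have "Q1 \<subseteq> nds s1"
  proof -
    have "edges s node \<subseteq> nds s"
      using pr_step.prems(1) node unfolding mo_wf_def by blast
    then show ?thesis
      using prop_inner_worklist[OF pr_step.hyps(2)] pr_step.prems(3) cv_variantD(1)[OF variant]
      by blast
  qed
  moreover have "mo_wf s1"
    using pr_step.prems(1) cv_variant_mo_wf[OF variant] by simp
  ultimately show ?case
    using pr_step.IH by simp
qed

lemma merge_propagate_invariants:
  assumes "mo_wf s" and "cv_sound s" and "(c, to) \<in> mo_graph s" and mp: "merge_propagate s to c s'"
  shows "mo_wf s' \<and> cv_sound s'"
proof -
  obtain b s1 where m: "merge s to c = (b, s1)"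
    and tail: "if b then propagate s1 {to} s' else s' = s1"
    using mp unfolding merge_propagate_def by blast
  have variant: "cv_variant s s1"
    using m by (rule merge_cv_variant)
  have "cv_sound s1"
    using assms(2,3) m by (rule merge_cv_sound)
  moreover have "to \<in> nds s1"
    using assms(1,3) cv_variantD(1)[OF variant] unfolding mo_wf_def mo_graph_def by blast
  ultimately have "cv_sound s'"
    using tail propagate_cv_sound assms(1) cv_variant_mo_wf[OF variant]
    by (auto split: if_splits)
  moreover have "mo_wf s'"
    using assms(1) cv_variant_mo_wf merge_propagate_cv_variant[OF mp] by blast
  ultimately show ?thesis by simp
qed

lemma add_succ_mo_wf:
  assumes "mo_wf s" and "c \<in> nds s" and "to \<in> nds s" and "loc s to = loc s c"
  shows "mo_wf (add_succ s c to)"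
  using assms
  by (intro mo_wfI) (auto simp: add_succ_def split: if_splits dest: mo_wf_edgeD mo_wf_rmwD)

lemma add_succ_mo_extends: "mo_extends s (add_succ s c to)"
proof -
  have "mo_graph s \<subseteq> mo_graph (add_succ s c to)"
    by (auto simp: mo_graph_def add_succ_def)
  then show ?thesis
    unfolding mo_extends_def by (auto simp: add_succ_def)
qed

lemma rmw_chain_mo_wf:
  "rmw_chain s x to c \<Longrightarrow> mo_wf s \<Longrightarrow> x \<in> nds s \<Longrightarrow> c \<in> nds s \<and> loc s c = loc s x"
proof (induction rule: rmw_chain.induct)
  case (rc_next s x n to c)
  then have "n \<in> nds s" "loc s n = loc s x"
    unfolding mo_wf_def by blast+
  with rc_next show ?case by simp
qed simp_all

lemma add_edge_cases:
  assumes "add_edge s a b s'"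
  obtains "s' = s" and "\<not> must_add s a b"
  | c where "rmw_chain s a b c" and "merge_propagate (add_succ s c b) b c s'"
  using assms
proof cases
  case ae_skip
  then show ?thesis using that(1) by blast
next
  case (ae_nomerge c)
  then show ?thesis using that(2)[of c] unfolding merge_propagate_def by fastforce
next
  case (ae_merge c s2)
  then show ?thesis using that(2)[of c] unfolding merge_propagate_def by fastforce
qed

lemma add_edge_preserves:
  assumes wf: "mo_wf s" and sound: "cv_sound s" and a: "a \<in> nds s" and b: "b \<in> nds s"
    and same_loc: "loc s a = loc s b" and add: "add_edge s a b s'"
  shows "mo_wf s' \<and> cv_sound s' \<and> mo_extends s s'"
  using add
proof (cases rule: add_edge_cases)
  case 1
  then show ?thesis using wf sound by (simp add: mo_extends_refl)
next
  case (2 c)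
  let ?s1 = "add_succ s c b"
  have c: "c \<in> nds s" "loc s c = loc s a"
    using rmw_chain_mo_wf[OF 2(1) wf a] by simp_all
  have ext1: "mo_extends s ?s1"
    by (rule add_succ_mo_extends)
  have "mo_wf ?s1"
    using add_succ_mo_wf wf c b same_loc by simp
  moreover have "cv_sound ?s1"
    using cv_sound_extends[OF sound ext1] by (simp add: add_succ_def)
  moreover have "(c, b) \<in> mo_graph ?s1"
    using c by (simp add: mo_graph_def add_succ_def)
  ultimately have "mo_wf s' \<and> cv_sound s'"
    using merge_propagate_invariants 2(2) by blast
  moreover have "mo_extends s s'"
    using mo_extends_trans[OF ext1 cv_variant_mo_extends[OF merge_propagate_cv_variant[OF 2(2)]]] .
  ultimately show ?thesis by simp
qed

lemma rmw_prep_add_succ_fields: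
  "nds (add_succ (rmw_prep s a b) a b) = nds s"
  "cv (add_succ (rmw_prep s a b) a b) = cv s"
  "tid (add_succ (rmw_prep s a b) a b) = tid s"
  "sq (add_succ (rmw_prep s a b) a b) = sq s"
  "loc (add_succ (rmw_prep s a b) a b) = loc s"
  "rmw (add_succ (rmw_prep s a b) a b) = (rmw s)(a := Some b)"
  "a \<noteq> b \<Longrightarrow> edges (add_succ (rmw_prep s a b) a b) =
     ((edges s)(b := edges s b \<union> (edges s a - {b})))(a := {b})"
  by (simp_all add: rmw_prep_def Let_def add_succ_def)

lemma rmw_prep_add_succ_mo_wf:
  assumes "mo_wf s" and "a \<in> nds s" and "b \<in> nds s" and "loc s a = loc s b" and "a \<noteq> b"
  shows "mo_wf (add_succ (rmw_prep s a b) a b)"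
  using assms
  by (intro mo_wfI)
    (auto simp: rmw_prep_add_succ_fields split: if_splits dest: mo_wf_edgeD mo_wf_rmwD)

lemma rmw_prep_add_succ_mo_extends:
  assumes "a \<in> nds s" and "b \<in> nds s" and "a \<noteq> b"
  shows "mo_extends s (add_succ (rmw_prep s a b) a b)"
proof -
  let ?s1 = "add_succ (rmw_prep s a b) a b"
  have link: "(a, b) \<in> mo_graph ?s1"
    using assms by (simp add: mo_graph_def rmw_prep_add_succ_fields)
  have "(x, y) \<in> (mo_graph ?s1)\<^sup>+" if "(x, y) \<in> mo_graph s" for x y
  proof (cases "x = a \<and> y \<noteq> b")
    case True
    \<comment> \<open>the successors of a have been moved to b\<close>
    then have "(b, y) \<in> mo_graph ?s1"
      using that assms by (simp add: mo_graph_def rmw_prep_add_succ_fields)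
    with link True show ?thesis by auto
  next
    case False
    then have "(x, y) \<in> mo_graph ?s1"
      using that assms by (auto simp: mo_graph_def rmw_prep_add_succ_fields)
    then show ?thesis by auto
  qed
  then show ?thesis
    unfolding mo_extends_def by (auto simp: rmw_prep_add_succ_fields)
qed

lemma add_rmw_edge_preserves:
  assumes wf: "mo_wf s" and sound: "cv_sound s" and a: "a \<in> nds s" and b: "b \<in> nds s"
    and same_loc: "loc s a = loc s b" and add: "add_rmw_edge s a b s'"
    and acyclic: "acyclic (mo_graph s')"
  shows "mo_wf s' \<and> cv_sound s' \<and> mo_extends s s'"
proof -
  let ?p = "rmw_prep s a b"
  let ?s1 = "add_succ ?p a b"
  have link: "rmw ?p a = Some b"
    by (simp add: rmw_prep_def Let_def)
  from add have "add_edge ?p a b s'"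
    by cases
  then have mp: "merge_propagate ?s1 b a s'"
  proof (cases rule: add_edge_cases)
    case 1
    with link show ?thesis by (simp add: must_add_def)
  next
    case (2 c)
    from 2(1) link have "c = a"
      by cases auto
    with 2(2) show ?thesis by simp
  qed
  have edge: "(a, b) \<in> mo_graph ?s1"
    using a by (simp add: mo_graph_def add_succ_def rmw_prep_def Let_def)
  then have "(a, b) \<in> mo_graph s'"
    using cv_variantD(7)[OF merge_propagate_cv_variant[OF mp]] by simp
  \<comment> \<open>for a = b, rmw_prep would drop the edges of a, so acyclicity is needed here\<close>
  with acyclic have "a \<noteq> b"
    unfolding acyclic_def by auto
  then have ext1: "mo_extends s ?s1"
    using rmw_prep_add_succ_mo_extends a b by blast
  have "mo_wf ?s1"
    using rmw_prep_add_succ_mo_wf wf a b same_loc \<open>a \<noteq> b\<close> by blast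
  moreover have "cv_sound ?s1"
    using cv_sound_extends[OF sound ext1] by (simp add: rmw_prep_add_succ_fields)
  ultimately have "mo_wf s' \<and> cv_sound s'"
    using merge_propagate_invariants edge mp by blast
  moreover have "mo_extends s s'"
    using mo_extends_trans[OF ext1 cv_variant_mo_extends[OF merge_propagate_cv_variant[OF mp]]] .
  ultimately show ?thesis by simp
qed

lemma new_node_preserves:
  assumes wf: "mo_wf s" and sound: "cv_sound s" and fresh: "n \<notin> nds s"
  shows "mo_wf (new_node s n t l) \<and> cv_sound (new_node s n t l) \<and> mo_extends s (new_node s n t l)"
proof -
  let ?s = "new_node s n t l"
  have fields: "nds ?s = insert n (nds s)" "edges ?s = (edges s)(n := {})"
    "rmw ?s = (rmw s)(n := None)" "tid ?s = (tid s)(n := t)" "sq ?s = (sq s)(n := Suc (ctr s))"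
    "loc ?s = (loc s)(n := l)" "cv ?s = (cv s)(n := bot_cv t (Suc (ctr s)))"
    by (simp_all add: new_node_def)
  have "mo_graph ?s = mo_graph s"
    using fresh by (auto simp: mo_graph_def fields split: if_splits)
  then have ext: "mo_extends s ?s"
    using fresh by (auto simp: mo_extends_def fields)
  have "mo_wf ?s"
    using wf fresh
    by (intro mo_wfI) (auto simp: fields split: if_splits dest: mo_wf_edgeD mo_wf_rmwD)
  moreover have "cv_sound ?s"
    unfolding cv_sound_def
  proof
    fix x
    assume x: "x \<in> nds ?s"
    show "sq ?s x \<le> cv ?s x (tid ?s x) \<and> (\<forall>u. mo_witnessed ?s x u (cv ?s x u))"
    proof (cases "x = n")
      case True
      then show ?thesis by (simp add: fields bot_cv_def mo_witnessed_def)
    next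
      case False
      with x fresh have "x \<in> nds s" "x \<noteq> n"
        by (auto simp: fields)
      with sound ext show ?thesis
        unfolding cv_sound_def by (simp add: fields) (blast intro: mo_witnessed_extends)
    qed
  qed
  ultimately show ?thesis
    using ext by simp
qed

lemma mo_step_preserves:
  assumes step: "mo_step s s'" and wf: "mo_wf s" and sound: "cv_sound s"
    and acyclic: "acyclic (mo_graph s')"
  shows "mo_wf s' \<and> cv_sound s' \<and> mo_extends s s'"
  using step
proof cases
  case st_event
  then have "mo_graph s' = mo_graph s"
    by (simp add: mo_graph_def)
  with st_event have ext: "mo_extends s s'"
    by (auto simp: mo_extends_def)
  have "cv_sound s'"
    using cv_sound_extends[OF sound ext] st_event by simp
  moreover have "mo_wf s' = mo_wf s"
    using st_event by (simp add: mo_wf_def)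
  ultimately show ?thesis
    using ext wf by simp
next
  case st_node
  with new_node_preserves[OF wf sound] show ?thesis by blast
next
  case st_edge
  with add_edge_preserves[OF wf sound] show ?thesis by blast
next
  case st_rmw
  with add_rmw_edge_preserves[OF wf sound] acyclic show ?thesis by blast
qed

lemma init_state_invariants: "init_state s \<Longrightarrow> mo_wf s \<and> cv_sound s"
  by (simp add: init_state_def mo_wf_def cv_sound_def)

lemma mo_extends_chain:
  assumes "\<And>k. k < n \<Longrightarrow> mo_extends (f k) (f (Suc k))" and "k \<le> n"
  shows "mo_extends (f k) (f n)"
  using assms(2)
proof (induction rule: dec_induct)
  case base
  then show ?case by (rule mo_extends_refl)
next
  case (step m)
  then show ?case using assms(1) mo_extends_trans by blast
qed

lemma mo_path_same_loc:
  assumes "mo_wf s" and "(y, x) \<in> (mo_graph s)\<^sup>+"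
  shows "loc s y = loc s x"
  using assms(2)
  by (induction rule: trancl_induct) (auto simp: mo_graph_def dest: mo_wf_edgeD[OF assms(1)])

lemma own_cv_eq_sq:
  assumes wf: "mo_wf s" and sound: "cv_sound s" and ext: "mo_extends s f"
    and sb: "sb_consistent f" and acyclic: "acyclic (mo_graph f)" and A: "A \<in> nds s"
  shows "cv s A (tid s A) = sq s A"
proof (rule antisym)
  from sound A have "mo_witnessed s A (tid s A) (cv s A (tid s A))"
    unfolding cv_sound_def by blast
  then consider "cv s A (tid s A) = 0"
    | B where "B \<in> nds s" "(B, A) \<in> (mo_graph s)\<^sup>*" "tid s B = tid s A" "cv s A (tid s A) \<le> sq s B"
    by (metis mo_witnessed_def)
  then show "cv s A (tid s A) \<le> sq s A"
  proof cases
    case 1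
    then show ?thesis by simp
  next
    case (2 B)
    show ?thesis
    proof (cases "B = A")
      case True
      with 2 show ?thesis by simp
    next
      case False
      with 2 have path: "(B, A) \<in> (mo_graph s)\<^sup>+"
        by (meson rtranclD)
      have "sq s B \<le> sq s A"
      proof (rule ccontr)
        assume "\<not> sq s B \<le> sq s A"
        moreover have "loc s B = loc s A"
          using mo_path_same_loc[OF wf path] .
        ultimately have "A \<in> nds f" "B \<in> nds f" "tid f A = tid f B" "loc f A = loc f B"
          "sq f A < sq f B"
          using ext A 2(1,3) unfolding mo_extends_def by auto
        then have "(A, B) \<in> (mo_graph f)\<^sup>+"
          using sb unfolding sb_consistent_def by blast
        moreover have "(B, A) \<in> (mo_graph f)\<^sup>+"
          using path mo_extends_trancl[OF ext] by blast
        ultimately show False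
          using acyclic unfolding acyclic_def by (meson trancl_trans)
      qed
      with 2(4) show ?thesis by simp
    qed
  qed
next
  from sound A show "sq s A \<le> cv s A (tid s A)"
    unfolding cv_sound_def by blast
qed

theorem lemma2:
  fixes ex :: "nat \<Rightarrow> mo_state" and n :: nat
  assumes "init_state (ex 0)"
    and "\<And>k. k < n \<Longrightarrow> mo_step (ex k) (ex (Suc k))"
    and "\<And>k. k \<le> n \<Longrightarrow> acyclic (mo_graph (ex k))"
    and "sb_consistent (ex n)"
  shows "\<forall>k\<le>n. \<forall>A\<in>nds (ex k).
           cv (ex k) A (tid (ex k) A) = bot_cv (tid (ex k) A) (sq (ex k) A) (tid (ex k) A)
         \<and> bot_cv (tid (ex k) A) (sq (ex k) A) (tid (ex k) A) = sq (ex k) A"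
proof -
  have inv: "mo_wf (ex k) \<and> cv_sound (ex k)" if "k \<le> n" for k
    using that
  proof (induction k)
    case 0
    show ?case using assms(1) by (rule init_state_invariants)
  next
    case (Suc k)
    then show ?case using mo_step_preserves[OF assms(2) _ _ assms(3)] by simp
  qed
  have ext: "mo_extends (ex k) (ex n)" if "k \<le> n" for k
    using mo_extends_chain[OF _ that] mo_step_preserves[OF assms(2) _ _ assms(3)] inv by simp
  show ?thesis
  proof (intro allI impI ballI)
    fix k A
    assume k: "k \<le> n" and A: "A \<in> nds (ex k)"
    with inv[OF k] have "cv (ex k) A (tid (ex k) A) = sq (ex k) A"
      using own_cv_eq_sq[OF _ _ ext[OF k] assms(4) assms(3)[OF order_refl] A] by blast
    then show "cv (ex k) A (tid (ex k) A) = bot_cv (tid (ex k) A) (sq (ex k) A) (tid (ex k) A)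
        \<and> bot_cv (tid (ex k) A) (sq (ex k) A) (tid (ex k) A) = sq (ex k) A"
      by (simp add: bot_cv_def)
  qed
qed

end
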